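(* Let $P,Q\in\mathbb{H}[q_1,q_2]$ and $a,b\in\mathbb{H}$. (1) If $P=(q_1-a)*P_1$ and $Q=(q_1-a)*Q_1$ for some $P_1,Q_1\in\mathbb{H}[q_1,q_2]$, then ${\rm Res}(P,Q;q_1)\equiv0$. (2) If $P=(q_2-b)*P_2$ and $Q=(q_2-b)*Q_2$ for some $P_2,Q_2\in\mathbb{H}[q_1,q_2]$, then ${\rm Res}(P,Q;q_2)\equiv0$.
   Context: $\mathbb{H}$ denotes the quaternions. A slice regular polynomial in two quaternionic variables is a function $\mathbb{H}^2\to\mathbb{H}$ of the form $P(q_1,q_2)=\sum_{n=0}^{N}\sum_{m=0}^{M}q_1^nq_2^ma_{n,m}$ with $a_{n,m}\in\mathbb{H}$ (coefficients on the right); $\deg_{q_1}P$, $\deg_{q_2}P$ are the degrees in $q_1$, $q_2$. The set of these is $\mathbb{H}[q_1,q_2]$, and $\mathbb{H}[q]$ denotes the analogous one-variable polynomials $\sum q^na_n$. The $*$-product is defined by $\big(\sum q_1^nq_2^ma_{n,m}\big)*\big(\sum q_1^nq_2^mb_{n,m}\big)=\sum_{n,m}q_1^nq_2^m\sum_{r\le n,s\le m}a_{r,s}b_{n-r,m-s}$ (and analogously in one variable); $(\mathbb{H}[q],+,* )$ is a left and right Ore domain and we let $\mathcal{L}$ be its skew field of quotients. Every $P\in\mathbb{H}[q_1,q_2]$ can be written as $P=\sum_{k=0}^{n}q_1^kP_k(q_2)$ with $P_k\in\mathbb{H}[q_2]$, and as $P=\sum_{k=0}^{r}q_2^k*\tilde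 P_k(q_1)$ with $\tilde P_k\in\mathbb{H}[q_1]$. Dieudonné determinant: for a skew field $(\mathbb F,+,\star)$, let $\overline{\mathbb F}^\star$ be the abelianization of its multiplicative group; ${\rm Det}^\star_N$ is the unique homomorphism $GL(N,\mathbb F)\to\overline{\mathbb F}^\star$ sending ${\rm diag}(\lambda_1,\dots,\lambda_N)$ to the class of $\lambda_1\star\cdots\star\lambda_N$, extended by the value $[0]$ on non-invertible matrices. Here ${\rm Det}^*_N$ is this determinant over $\mathcal L$; for a matrix with entries in $\mathbb{H}[q]$ its value has a slice regular polynomial representative, unique up to commutators, with which it is identified. Regular resultants: let $P=\sum_{k=0}^nq_1^kP_k(q_2)$, $Q=\sum_{k=0}^mq_1^kQ_k(q_2)$. The Sylvester matrix $A(q_2)$ is the $(n+m)\times(n+m)$ matrix whose $j$-th column ($1\le j\le m$) has entries $P_0,\dots,P_n$ in rows $j,\dots,j+n$ and zeros elsewhere, and whose $(m+j)$-th column ($1\le j\le n$) has entries $Q_0,\dots,Q_m$ in rows $j,\dots,j+m$ and zeros elsewhere; ${\rm Res}(P,Q;q_1):={\rm Det}^*_{n+m}(A(q_2))$. Likewise, with $P=\sum_{k=0}^rq_2^k*\tilde P_k(q_1)$, $Q=\sum_{k=0}^sq_2^k*\tilde Q_k(q_1)$, $B(q_1)$ is the $(r+s)\times(r+s)$ matrix built in the same way from $\tilde P_0,\dots,\tilde P_r$ (first $s$ columns) and $\tilde Q_0,\dots,\tilde Q_s$ (last $r$ columns), and ${\rm Res}(P,Q;q_2):={\rm Det}^*_{r+s}(B(q_1))$.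 "${\rm Res}\equiv0$" means it is the zero polynomial (zero class). *)

theory Defs
  imports Complex_Main
begin

datatype quat = Quat (re: real) (im1: real) (im2: real) (im3: real)

instantiation quat :: ring_1
begin
definition "0 = Quat 0 0 0 0"
definition "1 = Quat 1 0 0 0"
definition "x + y = Quat (re x + re y) (im1 x + im1 y) (im2 x + im2 y) (im3 x + im3 y)"
definition "- x = Quat (- re x) (- im1 x) (- im2 x) (- im3 x)"
definition "x - y = Quat (re x - re y) (im1 x - im1 y) (im2 x - im2 y) (im3 x - im3 y)"
definition "x * y = Quat
   (re x * re y - im1 x * im1 y - im2 x * im2 y - im3 x * im3 y)
   (re x * im1 y + im1 x * re y + im2 x * im3 y - im3 x * im2 y)
   (re x * im2 y - im1 x * im3 y + im2 x * re y + im3 x * im1 y)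
   (re x * im3 y + im1 x * im2 y - im2 x * im1 y + im3 x * re y)"
instance
  by standard (simp_all add: zero_quat_def one_quat_def plus_quat_def uminus_quat_def
      minus_quat_def times_quat_def algebra_simps quat.expand)
end

text \<open>One variable: coefficient function n |-> a_n of sum q^n a_n, finitely supported.\<close>
type_synonym qpoly = "nat \<Rightarrow> quat"

definition qpoly1 :: "qpoly \<Rightarrow> bool" where
  "qpoly1 p \<longleftrightarrow> finite {n. p n \<noteq> 0}"

definition one1 :: qpoly where "one1 = (\<lambda>n. if n = 0 then 1 else 0)"

definition star1 :: "qpoly \<Rightarrow> qpoly \<Rightarrow> qpoly" where
  "star1 p r = (\<lambda>n. \<Sum>k\<le>n. p k * r (n - k))"

text \<open>Two variables: (n,m) |-> a_{n,m} of sum q1^n q2^m a_{n,m}, finitely supported.\<close>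
type_synonym qpoly2 = "nat \<Rightarrow> nat \<Rightarrow> quat"

definition qpoly2 :: "qpoly2 \<Rightarrow> bool" where
  "qpoly2 P \<longleftrightarrow> finite {(n, m). P n m \<noteq> 0}"

definition star2 :: "qpoly2 \<Rightarrow> qpoly2 \<Rightarrow> qpoly2" where
  "star2 P R = (\<lambda>n m. \<Sum>r\<le>n. \<Sum>s\<le>m. P r s * R (n - r) (m - s))"

definition q1_minus :: "quat \<Rightarrow> qpoly2" where
  "q1_minus a = (\<lambda>n m. if n = 0 \<and> m = 0 then - a else if n = 1 \<and> m = 0 then 1 else 0)"

definition q2_minus :: "quat \<Rightarrow> qpoly2" where
  "q2_minus b = (\<lambda>n m. if n = 0 \<and> m = 0 then - b else if n = 0 \<and> m = 1 then 1 else 0)"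

definition deg_q1 :: "qpoly2 \<Rightarrow> nat" where
  "deg_q1 P = Max (insert 0 {n. \<exists>m. P n m \<noteq> 0})"

definition deg_q2 :: "qpoly2 \<Rightarrow> nat" where
  "deg_q2 P = Max (insert 0 {m. \<exists>n. P n m \<noteq> 0})"

text \<open>P = sum_k q1^k P_k(q2):  P_k(q2) = sum_m q2^m a_{k,m}.\<close>
definition coeff_q1 :: "qpoly2 \<Rightarrow> nat \<Rightarrow> qpoly" where
  "coeff_q1 P k = (\<lambda>m. P k m)"

text \<open>P = sum_k q2^k * P~_k(q1):  P~_k(q1) = sum_n q1^n a_{n,k}.\<close>
definition coeff_q2 :: "qpoly2 \<Rightarrow> nat \<Rightarrow> qpoly" where
  "coeff_q2 P k = (\<lambda>n. P n k)"

section \<open>Sylvester matrix (0-indexed, size n+m)\<close>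

definition sylvester :: "nat \<Rightarrow> nat \<Rightarrow> (nat \<Rightarrow> qpoly) \<Rightarrow> (nat \<Rightarrow> qpoly) \<Rightarrow> nat \<Rightarrow> nat \<Rightarrow> qpoly" where
  "sylvester n m Pc Qc = (\<lambda>i j.
     if j < m then (if j \<le> i \<and> i - j \<le> n then Pc (i - j) else (\<lambda>_. 0))
     else (if j - m \<le> i \<and> i - (j - m) \<le> m then Qc (i - (j - m)) else (\<lambda>_. 0)))"

text \<open>phi embeds (H[q],+,star) into the division ring 'd as its (right) skew field of quotients.\<close>
definition quotient_skew_field :: "(qpoly \<Rightarrow> 'd::division_ring) \<Rightarrow> bool" where
  "quotient_skew_field \<phi> \<longleftrightarrow>
     \<phi> one1 = 1 \<and>
     (\<forall>p r. qpoly1 p \<longrightarrow> qpoly1 r \<longrightarrow> \<phi> (\<lambda>n. p n + r n) = \<phi> p + \<phi> r) \<and>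
     (\<forall>p r. qpoly1 p \<longrightarrow> qpoly1 r \<longrightarrow> \<phi> (star1 p r) = \<phi> p * \<phi> r) \<and>
     inj_on \<phi> {p. qpoly1 p} \<and>
     (\<forall>x. \<exists>a b. qpoly1 a \<and> qpoly1 b \<and> b \<noteq> (\<lambda>_. 0) \<and> x = \<phi> a * inverse (\<phi> b))"

definition invertible_mat :: "nat \<Rightarrow> (nat \<Rightarrow> nat \<Rightarrow> 'd::division_ring) \<Rightarrow> bool" where
  "invertible_mat N A \<longleftrightarrow> (\<exists>B. \<forall>i<N. \<forall>j<N.
      (\<Sum>k<N. A i k * B k j) = (if i = j then 1 else 0) \<and>
      (\<Sum>k<N. B i k * A k j) = (if i = j then 1 else 0))"

text \<open>Det*_N(A) = [0] iff A is not invertible over the skew field of quotients L.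
  The type 'd ranges over division rings; any 'd carrying an embedding phi as above
  is (a copy of) L.\<close>
definition dieudonne_det_zero :: "'d::division_ring itself \<Rightarrow> nat \<Rightarrow> (nat \<Rightarrow> nat \<Rightarrow> qpoly) \<Rightarrow> bool" where
  "dieudonne_det_zero _ N A \<longleftrightarrow>
     (\<forall>\<phi> :: qpoly \<Rightarrow> 'd. quotient_skew_field \<phi> \<longrightarrow> \<not> invertible_mat N (\<lambda>i j. \<phi> (A i j)))"

text \<open>Res(P,Q;q1) == 0 and Res(P,Q;q2) == 0 (convention: resultant with the zero polynomial is 0).\<close>
definition res_q1_zero :: "'d::division_ring itself \<Rightarrow> qpoly2 \<Rightarrow> qpoly2 \<Rightarrow> bool" where
  "res_q1_zero T P Q \<longleftrightarrow> P = (\<lambda>_ _. 0) \<or> Q = (\<lambda>_ _. 0) \<or>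
     dieudonne_det_zero T (deg_q1 P + deg_q1 Q)
       (sylvester (deg_q1 P) (deg_q1 Q) (coeff_q1 P) (coeff_q1 Q))"

definition res_q2_zero :: "'d::division_ring itself \<Rightarrow> qpoly2 \<Rightarrow> qpoly2 \<Rightarrow> bool" where
  "res_q2_zero T P Q \<longleftrightarrow> P = (\<lambda>_ _. 0) \<or> Q = (\<lambda>_ _. 0) \<or>
     dieudonne_det_zero T (deg_q2 P + deg_q2 Q)
       (sylvester (deg_q2 P) (deg_q2 Q) (coeff_q2 P) (coeff_q2 Q))"

end

theory Submission
  imports Defs
begin

(* Evaluating at q1 = a from the left, i.e. forming sum_k a^k P_k(q2), kills every product
   (q1 - a) * R, because the sum telescopes. Each column of the Sylvester matrix lists the
   coefficients of P or of Q shifted down, so the row vector of constants (1, a, a^2, ...)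
   annihilates the matrix from the left. Its image under any embedding of H[q] into a skew
   field is nonzero, hence the image of the matrix is not invertible. The statement for q2
   follows by exchanging the two variables. *)

lemma not_invertible_mat_if_left_null_vector:
  fixes A :: "nat \<Rightarrow> nat \<Rightarrow> 'd::division_ring"
  assumes "i0 < N" "w i0 \<noteq> 0"
    and null: "\<And>j. j < N \<Longrightarrow> (\<Sum>i<N. w i * A i j) = 0"
  shows "\<not> invertible_mat N A"
proof
  assume "invertible_mat N A"
  then obtain B where B: "\<forall>i<N. \<forall>j<N. (\<Sum>k<N. A i k * B k j) = (if i = j then 1 else 0)"
    unfolding invertible_mat_def by blast
  have "w i0 = (\<Sum>i<N. w i * (if i = i0 then 1 else 0))"
    using assms(1) by (simp add: if_distrib sum.delta cong: if_cong)
  also have "\<dots> = (\<Sum>i<N. w i * (\<Sum>k<N. A i k * B k i0))"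
    using B assms(1) by (intro sum.cong) auto
  also have "\<dots> = (\<Sum>i<N. \<Sum>k<N. w i * A i k * B k i0)"
    by (simp add: sum_distrib_left mult.assoc)
  also have "\<dots> = (\<Sum>k<N. (\<Sum>i<N. w i * A i k) * B k i0)"
    by (subst sum.swap) (simp add: sum_distrib_right)
  also have "\<dots> = 0"
    using null by simp
  finally show False
    using assms(2) by simp
qed

lemma star2_q1_minus:
  "star2 (q1_minus a) R n m = (if n = 0 then 0 else R (n - 1) m) - a * R n m"
proof -
  have inner: "(\<Sum>s\<le>m. q1_minus a r s * R (n - r) (m - s)) =
      (if r = 0 then - a * R n m else if r = 1 then R (n - 1) m else 0)" for r
  proof -
    have "(\<Sum>s\<le>m. q1_minus a r s * R (n - r) (m - s)) =
        (\<Sum>s\<le>m. if s = 0 then (if r = 0 then - a else if r = 1 then 1 else 0) * R (n - r) m else 0)"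
      by (rule sum.cong) (auto simp: q1_minus_def)
    then show ?thesis
      by (simp add: sum.delta)
  qed
  have "star2 (q1_minus a) R n m =
      (\<Sum>r\<le>n. if r = 0 then - a * R n m else if r = 1 then R (n - 1) m else 0)"
    by (simp add: star2_def inner)
  then show ?thesis
    by (cases n) (simp_all add: sum.atMost_Suc_shift sum.delta del: sum.atMost_Suc)
qed

lemma sum_power_star2_q1_minus:
  "(\<Sum>k\<le>L. a ^ k * star2 (q1_minus a) R k t) = - (a ^ Suc L * R L t)"
proof (induction L)
  case 0
  then show ?case by (simp add: star2_q1_minus)
next
  case (Suc L)
  then have "(\<Sum>k\<le>Suc L. a ^ k * star2 (q1_minus a) R k t) =
      - (a ^ Suc L * R L t) + a ^ Suc L * (R L t - a * R (Suc L) t)"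
    by (simp add: star2_q1_minus)
  also have "\<dots> = - (a ^ Suc L * a * R (Suc L) t)"
    by (simp add: algebra_simps)
  finally show ?case
    by (simp only: power_Suc2)
qed

lemma qpoly2_bounded_q1:
  assumes "qpoly2 R"
  obtains B where "\<And>n m. B \<le> n \<Longrightarrow> R n m = 0"
proof -
  have "finite (fst ` {(n, m). R n m \<noteq> 0})"
    using assms unfolding qpoly2_def by blast
  then obtain B where "\<forall>n\<in>fst ` {(n, m). R n m \<noteq> 0}. n < B"
    using finite_nat_set_iff_bounded by blast
  then have "R n m = 0" if "B \<le> n" for n m
    using that by (force simp: image_iff)
  then show thesis
    using that by blast
qed

lemma qpoly2_eq_0_above_deg_q1:
  assumes "qpoly2 P" "deg_q1 P < k"
  shows "P k t = 0"
proof (rule ccontr)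
  assume "P k t \<noteq> 0"
  have "{n. \<exists>m. P n m \<noteq> 0} = fst ` {(n, m). P n m \<noteq> 0}"
    by force
  then have "finite {n. \<exists>m. P n m \<noteq> 0}"
    using assms(1) unfolding qpoly2_def by simp
  then have "k \<le> deg_q1 P"
    unfolding deg_q1_def using \<open>P k t \<noteq> 0\<close> by (intro Max_ge) auto
  then show False
    using assms(2) by simp
qed

lemma sum_power_star2_q1_minus_eq_0:
  assumes "qpoly2 P" "qpoly2 R" "P = star2 (q1_minus a) R" "deg_q1 P \<le> L"
  shows "(\<Sum>k\<le>L. a ^ k * P k t) = 0"
proof -
  obtain B where B: "\<And>n m. B \<le> n \<Longrightarrow> R n m = 0"
    using qpoly2_bounded_q1[OF assms(2)] by blast
  have "(\<Sum>k\<le>L. a ^ k * P k t) = (\<Sum>k\<le>max L B. a ^ k * P k t)"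
    using qpoly2_eq_0_above_deg_q1[OF assms(1)] assms(4)
    by (intro sum.mono_neutral_left) auto
  also have "\<dots> = - (a ^ Suc (max L B) * R (max L B) t)"
    unfolding assms(3) by (rule sum_power_star2_q1_minus)
  finally show ?thesis
    using B by simp
qed

lemma deg_q1_star2_q1_minus_pos:
  assumes "qpoly2 P" "qpoly2 R" "P = star2 (q1_minus a) R" "P \<noteq> (\<lambda>_ _. 0)"
  shows "0 < deg_q1 P"
proof (rule ccontr)
  assume "\<not> 0 < deg_q1 P"
  then have "P k t = 0" for k t
    using sum_power_star2_q1_minus_eq_0[OF assms(1-3), of 0 t]
      qpoly2_eq_0_above_deg_q1[OF assms(1), of k t]
    by (cases k) auto
  then show False
    using assms(4) by blast
qed

lemma sum_power_shifted_column:
  fixes a :: "'a::ring_1"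
  assumes "j + d < N"
  shows "(\<Sum>i<N. a ^ i * (if j \<le> i \<and> i - j \<le> d then f (i - j) else 0)) =
    a ^ j * (\<Sum>k\<le>d. a ^ k * f k)"
proof -
  have "(\<Sum>i<N. a ^ i * (if j \<le> i \<and> i - j \<le> d then f (i - j) else 0)) =
      (\<Sum>i\<in>{j..j + d}. a ^ i * f (i - j))"
    using assms by (intro sum.mono_neutral_cong_right) auto
  also have "\<dots> = (\<Sum>k\<le>d. a ^ (k + j) * f k)"
    using sum.shift_bounds_cl_nat_ivl[of "\<lambda>i. a ^ i * f (i - j)" 0 j d]
    by (simp add: atLeast0AtMost add.commute)
  also have "\<dots> = a ^ j * (\<Sum>k\<le>d. a ^ k * f k)"
    by (simp add: sum_distrib_left power_add[symmetric] mult.assoc[symmetric] add.commute)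
  finally show ?thesis .
qed

lemma sum_power_sylvester_eq_0:
  assumes "\<And>t. (\<Sum>k\<le>n. a ^ k * Pc k t) = 0" "\<And>t. (\<Sum>k\<le>m. a ^ k * Qc k t) = 0"
    and "j < n + m"
  shows "(\<Sum>i<n + m. a ^ i * sylvester n m Pc Qc i j t) = 0"
proof (cases "j < m")
  case True
  then have "(\<Sum>i<n + m. a ^ i * sylvester n m Pc Qc i j t) =
      (\<Sum>i<n + m. a ^ i * (if j \<le> i \<and> i - j \<le> n then Pc (i - j) t else 0))"
    by (intro sum.cong) (simp_all add: sylvester_def)
  also have "\<dots> = 0"
    using True assms(1) by (subst sum_power_shifted_column[where f = "\<lambda>k. Pc k t"]) auto
  finally show ?thesis .
next
  case False
  then have "(\<Sum>i<n + m. a ^ i * sylvester n m Pc Qc i j t) =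
      (\<Sum>i<n + m. a ^ i * (if j - m \<le> i \<and> i - (j - m) \<le> m then Qc (i - (j - m)) t else 0))"
    by (intro sum.cong) (simp_all add: sylvester_def)
  also have "\<dots> = 0"
    using False assms(2,3) by (subst sum_power_shifted_column[where f = "\<lambda>k. Qc k t"]) auto
  finally show ?thesis .
qed

definition const1 :: "quat \<Rightarrow> qpoly" where
  "const1 c = (\<lambda>n. if n = 0 then c else 0)"

lemma qpoly1_const1: "qpoly1 (const1 c)"
  unfolding qpoly1_def const1_def by (rule finite_subset[of _ "{0}"]) auto

lemma star1_const1: "star1 (const1 c) p = (\<lambda>t. c * p t)"
proof
  fix t
  have "(\<Sum>k\<le>t. const1 c k * p (t - k)) = (\<Sum>k\<le>t. if k = 0 then c * p (t - k) else 0)"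
    by (rule sum.cong) (auto simp: const1_def)
  then show "star1 (const1 c) p t = c * p t"
    by (simp add: star1_def sum.delta)
qed

lemma qpoly1_sum:
  assumes "finite I" "\<And>i. i \<in> I \<Longrightarrow> qpoly1 (f i)"
  shows "qpoly1 (\<lambda>t. \<Sum>i\<in>I. f i t)"
proof -
  have "{t. (\<Sum>i\<in>I. f i t) \<noteq> 0} \<subseteq> (\<Union>i\<in>I. {t. f i t \<noteq> 0})"
    by (auto intro: ccontr simp: sum.neutral)
  moreover have "finite (\<Union>i\<in>I. {t. f i t \<noteq> 0})"
    using assms unfolding qpoly1_def by blast
  ultimately show ?thesis
    unfolding qpoly1_def by (rule finite_subset)
qed

lemma qpoly1_scale: "qpoly1 p \<Longrightarrow> qpoly1 (\<lambda>t. c * p t)"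
  unfolding qpoly1_def by (rule finite_subset[rotated]) auto

lemma quotient_skew_field_add:
  "quotient_skew_field \<phi> \<Longrightarrow> qpoly1 p \<Longrightarrow> qpoly1 r \<Longrightarrow> \<phi> (\<lambda>n. p n + r n) = \<phi> p + \<phi> r"
  unfolding quotient_skew_field_def by blast

lemma quotient_skew_field_star1:
  "quotient_skew_field \<phi> \<Longrightarrow> qpoly1 p \<Longrightarrow> qpoly1 r \<Longrightarrow> \<phi> (star1 p r) = \<phi> p * \<phi> r"
  unfolding quotient_skew_field_def by blast

lemma quotient_skew_field_zero:
  assumes "quotient_skew_field \<phi>"
  shows "\<phi> (\<lambda>_. 0) = 0"
  using quotient_skew_field_add[OF assms, of "\<lambda>_. 0" "\<lambda>_. 0"] by (simp add: qpoly1_def)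

lemma quotient_skew_field_sum:
  assumes "quotient_skew_field \<phi>" "finite I" "\<And>i. i \<in> I \<Longrightarrow> qpoly1 (f i)"
  shows "\<phi> (\<lambda>t. \<Sum>i\<in>I. f i t) = (\<Sum>i\<in>I. \<phi> (f i))"
  using assms(2,3)
proof (induction I rule: finite_induct)
  case empty
  then show ?case
    using quotient_skew_field_zero[OF assms(1)] by simp
next
  case (insert x F)
  have "\<phi> (\<lambda>t. f x t + (\<Sum>i\<in>F. f i t)) = \<phi> (f x) + \<phi> (\<lambda>t. \<Sum>i\<in>F. f i t)"
    using insert by (intro quotient_skew_field_add[OF assms(1)] qpoly1_sum) auto
  with insert show ?case
    by simp
qed

lemma quotient_skew_field_scale:
  assumes "quotient_skew_field \<phi>" "qpoly1 p"
  shows "\<phi> (\<lambda>t. c * p t) = \<phi> (const1 c) * \<phi> p"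
  using quotient_skew_field_star1[OF assms(1) qpoly1_const1 assms(2)] by (simp add: star1_const1)

lemma dieudonne_det_zero_if_left_evaluation_vanishes:
  assumes "0 < N" "\<And>i j. qpoly1 (A i j)"
    and vanish: "\<And>j t. j < N \<Longrightarrow> (\<Sum>i<N. a ^ i * A i j t) = 0"
  shows "dieudonne_det_zero TYPE('d::division_ring) N A"
  unfolding dieudonne_det_zero_def
proof (intro allI impI)
  fix \<phi> :: "qpoly \<Rightarrow> 'd"
  assume \<phi>: "quotient_skew_field \<phi>"
  have "const1 (a ^ 0) = one1"
    by (simp add: const1_def one1_def)
  then have "\<phi> (const1 (a ^ 0)) = 1"
    using \<phi> unfolding quotient_skew_field_def by simp
  moreover have "(\<Sum>i<N. \<phi> (const1 (a ^ i)) * \<phi> (A i j)) = 0" if "j < N" for j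
  proof -
    have "(\<Sum>i<N. \<phi> (const1 (a ^ i)) * \<phi> (A i j)) = \<phi> (\<lambda>t. \<Sum>i<N. a ^ i * A i j t)"
      by (subst quotient_skew_field_sum[OF \<phi>])
        (simp_all add: quotient_skew_field_scale[OF \<phi>] qpoly1_scale assms(2))
    also have "\<dots> = 0"
      using vanish[OF that] quotient_skew_field_zero[OF \<phi>] by simp
    finally show ?thesis .
  qed
  ultimately show "\<not> invertible_mat N (\<lambda>i j. \<phi> (A i j))"
    using assms(1) by (intro not_invertible_mat_if_left_null_vector[where w = "\<lambda>i. \<phi> (const1 (a ^ i))"]) auto
qed

lemma qpoly1_coeff_q1: "qpoly2 P \<Longrightarrow> qpoly1 (coeff_q1 P k)"
proof -
  assume "qpoly2 P"
  then have "finite (snd ` {(n, m). P n m \<noteq> 0})"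
    unfolding qpoly2_def by blast
  moreover have "{m. coeff_q1 P k m \<noteq> 0} \<subseteq> snd ` {(n, m). P n m \<noteq> 0}"
    by (force simp: coeff_q1_def)
  ultimately show ?thesis
    unfolding qpoly1_def by (rule finite_subset[rotated])
qed

lemma qpoly1_sylvester:
  "(\<And>k. qpoly1 (Pc k)) \<Longrightarrow> (\<And>k. qpoly1 (Qc k)) \<Longrightarrow> qpoly1 (sylvester n m Pc Qc i j)"
  by (simp add: sylvester_def qpoly1_def)

lemma res_q1_zero_common_left_factor:
  assumes "qpoly2 P" "qpoly2 Q" "qpoly2 P1" "qpoly2 Q1"
    and "P = star2 (q1_minus a) P1" "Q = star2 (q1_minus a) Q1"
  shows "res_q1_zero TYPE('d::division_ring) P Q"
proof (cases "P = (\<lambda>_ _. 0) \<or> Q = (\<lambda>_ _. 0)")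
  case True
  then show ?thesis
    unfolding res_q1_zero_def by blast
next
  case False
  then have "0 < deg_q1 P + deg_q1 Q"
    using deg_q1_star2_q1_minus_pos[OF assms(1,3,5)] by auto
  moreover have "(\<Sum>i<deg_q1 P + deg_q1 Q.
      a ^ i * sylvester (deg_q1 P) (deg_q1 Q) (coeff_q1 P) (coeff_q1 Q) i j t) = 0"
    if "j < deg_q1 P + deg_q1 Q" for j t
    using that sum_power_star2_q1_minus_eq_0[OF assms(1,3,5) order_refl]
      sum_power_star2_q1_minus_eq_0[OF assms(2,4,6) order_refl]
    by (intro sum_power_sylvester_eq_0) (simp_all add: coeff_q1_def)
  ultimately show ?thesis
    unfolding res_q1_zero_def
    by (intro disjI2 dieudonne_det_zero_if_left_evaluation_vanishes qpoly1_sylvester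
        qpoly1_coeff_q1 assms(1,2))
qed

definition swap_vars :: "qpoly2 \<Rightarrow> qpoly2" where
  "swap_vars P = (\<lambda>n m. P m n)"

lemma swap_vars_swap_vars [simp]: "swap_vars (swap_vars P) = P"
  by (simp add: swap_vars_def)

lemma qpoly2_swap_vars: "qpoly2 P \<Longrightarrow> qpoly2 (swap_vars P)"
proof -
  assume "qpoly2 P"
  moreover have "{(n, m). swap_vars P n m \<noteq> 0} = prod.swap ` {(n, m). P n m \<noteq> 0}"
    by (force simp: swap_vars_def)
  ultimately show ?thesis
    unfolding qpoly2_def by simp
qed

lemma star2_swap_vars: "star2 (swap_vars P) (swap_vars R) = swap_vars (star2 P R)"
  unfolding star2_def swap_vars_def by (intro ext) (rule sum.swap)

lemma q2_minus_eq_swap_vars: "q2_minus b = swap_vars (q1_minus b)"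
  unfolding q2_minus_def q1_minus_def swap_vars_def by (intro ext) auto

lemma res_q2_zero_iff_res_q1_zero_swap_vars:
  "res_q2_zero T P Q \<longleftrightarrow> res_q1_zero T (swap_vars P) (swap_vars Q)"
proof -
  have "deg_q2 X = deg_q1 (swap_vars X)" "coeff_q2 X = coeff_q1 (swap_vars X)"
    "X = (\<lambda>_ _. 0) \<longleftrightarrow> swap_vars X = (\<lambda>_ _. 0)" for X
    unfolding deg_q2_def deg_q1_def coeff_q2_def coeff_q1_def swap_vars_def by (auto dest: fun_cong)
  then show ?thesis
    unfolding res_q2_zero_def res_q1_zero_def by metis
qed

lemma res_q2_zero_common_left_factor:
  assumes "qpoly2 P" "qpoly2 Q" "qpoly2 P2" "qpoly2 Q2"
    and "P = star2 (q2_minus b) P2" "Q = star2 (q2_minus b) Q2"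
  shows "res_q2_zero TYPE('d::division_ring) P Q"
proof -
  have swap_factor: "swap_vars (star2 (q2_minus b) R) = star2 (q1_minus b) (swap_vars R)" for R
    by (metis q2_minus_eq_swap_vars star2_swap_vars swap_vars_swap_vars)
  show ?thesis
    unfolding res_q2_zero_iff_res_q1_zero_swap_vars
    using qpoly2_swap_vars[OF assms(1)] qpoly2_swap_vars[OF assms(2)]
      qpoly2_swap_vars[OF assms(3)] qpoly2_swap_vars[OF assms(4)]
    by (intro res_q1_zero_common_left_factor[of _ _ "swap_vars P2" "swap_vars Q2" b])
      (simp_all add: assms(5,6) swap_factor)
qed

theorem proposition4p7:
  fixes P Q :: qpoly2 and a b :: quat
  assumes "qpoly2 P" and "qpoly2 Q"
  shows "(\<forall>P1 Q1. qpoly2 P1 \<and> qpoly2 Q1 \<and> P = star2 (q1_minus a) P1 \<and> Q = star2 (q1_minus a) Q1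
            \<longrightarrow> res_q1_zero TYPE('d::division_ring) P Q)
       \<and> (\<forall>P2 Q2. qpoly2 P2 \<and> qpoly2 Q2 \<and> P = star2 (q2_minus b) P2 \<and> Q = star2 (q2_minus b) Q2
            \<longrightarrow> res_q2_zero TYPE('d::division_ring) P Q)"
  using assms res_q1_zero_common_left_factor res_q2_zero_common_left_factor by blast

end
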